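(* Let $(a_k)_{k\geqslant1}$ be a sequence of complex numbers and $S(x)=\sum_{k\leqslant x}a_k\left[\frac{x}{k}\right]\log k$. Suppose that for every $v>1$, $\lim_{k\to\infty}|S(k)|/k^{v}=0$. Then the series $\sum_{m=1}^\infty a_m m^{-v}$ converges for every $v>1$.
   Context: $[x]$ denotes the integer part of a real number $x$. *)

theory Defs
  imports "HOL-Analysis.Analysis"
begin

text \<open>S(x) = sum over 1 <= k <= x of a_k [x/k] log k, evaluated at natural numbers n.
  The sequence a is indexed from 1; the value a 0 is irrelevant.\<close>
definition S_fun :: "(nat \<Rightarrow> complex) \<Rightarrow> nat \<Rightarrow> complex" where
  "S_fun a n = (\<Sum>k=1..n. a k * of_int \<lfloor>real n / real k\<rfloor> * of_real (ln (real k)))"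

end

theory Submission
  imports Defs "HOL-Computational_Algebra.Squarefree"
begin

(* Put B(x) = sum_{k <= x} a_k log k. Exchanging the order of summation gives
   S(n) = sum_{j <= n} B(floor(n/j)), so Moebius inversion recovers
   B(n) = sum_{j <= n} mu(j) S(floor(n/j)). For 1 < v < s the hypothesis gives |S(k)| = O(k^v),
   hence |B(n)| <= C zeta(v) n^v. Partial summation against the weights n^-s / log n, whose
   consecutive differences are O(n^(-s-1)), then shows that
   sum a_n n^-s = sum (a_n log n) (n^-s / log n) converges. *)

definition moebius_mu :: "nat \<Rightarrow> int" where
  "moebius_mu n = (if squarefree n then (-1) ^ card (prime_factors n) else 0)"

lemma abs_moebius_mu_le: "\<bar>moebius_mu n\<bar> \<le> 1"
  by (simp add: moebius_mu_def)

lemma prime_factors_prod_primes: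
  fixes P :: "nat set"
  assumes "finite P" "\<And>p. p \<in> P \<Longrightarrow> prime p"
  shows "prime_factors (\<Prod>P) = P"
  using assms by (subst prime_factors_prod) (auto simp: prime_prime_factors, metis not_prime_0)

lemma squarefree_prod_primes:
  fixes P :: "nat set"
  assumes "\<And>p. p \<in> P \<Longrightarrow> prime p"
  shows "squarefree (\<Prod>P)"
  using squarefree_prod_coprime[of P id] assms
  by (auto simp: primes_coprime squarefree_prime)

lemma prod_prime_factors_squarefree:
  fixes d :: nat
  assumes "squarefree d"
  shows "\<Prod>(prime_factors d) = d"
proof -
  have "d \<noteq> 0" using assms by (metis not_squarefree_0)
  then have "d = (\<Prod>p\<in>prime_factors d. p ^ multiplicity p d)"
    using prime_factorization_nat by blast
  also have "\<dots> = \<Prod>(prime_factors d)"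
    using assms \<open>d \<noteq> 0\<close> by (intro prod.cong) (auto simp: squarefree_factorial_semiring')
  finally show ?thesis by simp
qed

lemma bij_betw_prod_squarefree_divisors:
  fixes n :: nat
  assumes "n > 0"
  shows "bij_betw Prod (Pow (prime_factors n)) {d. d dvd n \<and> squarefree d}"
proof (rule bij_betwI[where g = prime_factors])
  show "Prod \<in> Pow (prime_factors n) \<rightarrow> {d. d dvd n \<and> squarefree d}"
  proof
    fix P assume P: "P \<in> Pow (prime_factors n)"
    then have "finite P" by (auto intro: finite_subset)
    have "mset_set P \<subseteq># mset_set (prime_factors n)"
      using P \<open>finite P\<close> by (auto intro!: subset_imp_msubset_mset_set)
    also have "\<dots> \<subseteq># prime_factorization n" by (rule mset_set_set_mset_msubset)
    finally have "prod_mset (mset_set P) dvd prod_mset (prime_factorization n)"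
      by (rule prod_mset_subset_imp_dvd)
    then have "\<Prod>P dvd n"
      using assms by (simp add: prod_unfold_prod_mset)
    with P show "\<Prod>P \<in> {d. d dvd n \<and> squarefree d}"
      by (auto intro: squarefree_prod_primes)
  qed
  show "prime_factors \<in> {d. d dvd n \<and> squarefree d} \<rightarrow> Pow (prime_factors n)"
    using assms dvd_prime_factors[of n] by auto
  show "prime_factors (\<Prod>P) = P" if "P \<in> Pow (prime_factors n)" for P
    using that by (intro prime_factors_prod_primes) (auto intro: finite_subset)
  show "\<Prod>(prime_factors d) = d" if "d \<in> {d. d dvd n \<and> squarefree d}" for d
    using that prod_prime_factors_squarefree by auto
qed

lemma sum_moebius_mu_divisors:
  fixes n :: nat
  assumes "n > 0"
  shows "(\<Sum>d | d dvd n. moebius_mu d) = (if n = 1 then 1 else 0)"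
proof -
  let ?F = "prime_factors n"
  have "(\<Sum>d | d dvd n. moebius_mu d) = (\<Sum>d | d dvd n \<and> squarefree d. moebius_mu d)"
    using assms by (intro sum.mono_neutral_right) (auto simp: moebius_mu_def)
  also have "\<dots> = (\<Sum>P \<in> Pow ?F. moebius_mu (\<Prod>P))"
    by (rule sum.reindex_bij_betw[OF bij_betw_prod_squarefree_divisors[OF assms], symmetric])
  also have "\<dots> = (\<Sum>P \<in> Pow ?F. (-1) ^ card P)"
  proof (intro sum.cong refl)
    fix P assume "P \<in> Pow ?F"
    then have "finite P" "\<And>p. p \<in> P \<Longrightarrow> prime p"
      by (auto intro: finite_subset in_prime_factors_imp_prime)
    then show "moebius_mu (\<Prod>P) = (-1) ^ card P"
      by (simp add: moebius_mu_def squarefree_prod_primes prime_factors_prod_primes)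
  qed
  also have "\<dots> = (\<Prod>p\<in>?F. 1 - 1)"
    using prod_diff_conv_sum[of ?F "\<lambda>_. 1::int" "\<lambda>_. 1"] by simp
  also have "\<dots> = (if n = 1 then 1 else 0)"
    using assms by (auto simp: card_gt_0_iff prime_factorization_empty_iff set_mset_eq_empty_iff)
  finally show ?thesis .
qed

lemma atLeastAtMost_div_eq:
  fixes j n :: nat
  assumes "j \<ge> 1"
  shows "{1..n div j} = {k \<in> {1..n}. j * k \<le> n}"
proof -
  have "k \<le> n" if "j * k \<le> n" for k
    using assms that by (metis le_trans mult_le_mono1 mult_1)
  with assms show ?thesis
    by (auto simp: less_eq_div_iff_mult_less_eq mult.commute)
qed

lemma sum_sum_div_swap:
  fixes g :: "nat \<Rightarrow> nat \<Rightarrow> 'a::comm_monoid_add"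
  shows "(\<Sum>j=1..n. \<Sum>k=1..n div j. g j k) = (\<Sum>k=1..n. \<Sum>j=1..n div k. g j k)"
proof -
  have "(\<Sum>j=1..n. \<Sum>k=1..n div j. g j k) = (\<Sum>j=1..n. \<Sum>k\<in>{k \<in> {1..n}. j * k \<le> n}. g j k)"
    by (intro sum.cong refl atLeastAtMost_div_eq) auto
  also have "\<dots> = (\<Sum>k=1..n. \<Sum>j\<in>{j \<in> {1..n}. j * k \<le> n}. g j k)"
    by (rule sum.swap_restrict) auto
  also have "\<dots> = (\<Sum>k=1..n. \<Sum>j=1..n div k. g j k)"
  proof (rule sum.cong[OF refl])
    fix k assume "k \<in> {1..n}"
    then have "{1..n div k} = {j \<in> {1..n}. j * k \<le> n}"
      by (subst atLeastAtMost_div_eq) (auto simp: mult.commute)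
    then show "(\<Sum>j\<in>{j \<in> {1..n}. j * k \<le> n}. g j k) = (\<Sum>j=1..n div k. g j k)"
      by simp
  qed
  finally show ?thesis .
qed

lemma image_mult_atLeastAtMost_div:
  fixes j n :: nat
  assumes "j \<ge> 1"
  shows "(*) j ` {1..n div j} = {m \<in> {1..n}. j dvd m}"
proof -
  have "m \<in> (*) j ` {1..n div j}" if "m \<in> {1..n}" "j dvd m" for m
  proof -
    from that obtain i where i: "m = j * i" "i \<ge> 1" by (auto elim!: dvdE)
    with that assms have "i \<in> {1..n div j}"
      by (simp add: less_eq_div_iff_mult_less_eq mult.commute)
    with i show ?thesis by blast
  qed
  moreover have "j * i \<in> {1..n}" if "i \<in> {1..n div j}" for i
    using assms that by (auto simp: less_eq_div_iff_mult_less_eq mult.commute)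
  ultimately show ?thesis by auto
qed

lemma sum_sum_div_mult:
  fixes h :: "nat \<Rightarrow> nat \<Rightarrow> 'a::comm_monoid_add"
  shows "(\<Sum>j=1..n. \<Sum>i=1..n div j. h j (j * i)) = (\<Sum>m=1..n. \<Sum>j | j dvd m. h j m)"
proof -
  have "(\<Sum>j=1..n. \<Sum>i=1..n div j. h j (j * i)) = (\<Sum>j=1..n. \<Sum>m\<in>{m \<in> {1..n}. j dvd m}. h j m)"
  proof (rule sum.cong[OF refl])
    fix j assume "j \<in> {1..n}"
    then have j: "j \<ge> 1" by simp
    then have "inj_on ((*) j) {1..n div j}" by (auto simp: inj_on_def)
    then have "(\<Sum>i=1..n div j. h j (j * i)) = (\<Sum>m\<in>(*) j ` {1..n div j}. h j m)"
      by (simp add: sum.reindex)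
    then show "(\<Sum>i=1..n div j. h j (j * i)) = (\<Sum>m\<in>{m \<in> {1..n}. j dvd m}. h j m)"
      by (simp only: image_mult_atLeastAtMost_div[OF j])
  qed
  also have "\<dots> = (\<Sum>m=1..n. \<Sum>j\<in>{j \<in> {1..n}. j dvd m}. h j m)"
    by (rule sum.swap_restrict) auto
  also have "\<dots> = (\<Sum>m=1..n. \<Sum>j | j dvd m. h j m)"
    by (intro sum.cong refl arg_cong2[where f = sum]) (auto dest: dvd_imp_le)
  finally show ?thesis .
qed

lemma moebius_inversion_div:
  fixes F G :: "nat \<Rightarrow> 'a::ring_1"
  assumes G: "\<And>m. G m = (\<Sum>i=1..m. F (m div i))" and "n \<ge> 1"
  shows "F n = (\<Sum>j=1..n. of_int (moebius_mu j) * G (n div j))"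
proof -
  have "(\<Sum>j=1..n. of_int (moebius_mu j) * G (n div j))
      = (\<Sum>j=1..n. \<Sum>i=1..n div j. of_int (moebius_mu j) * F (n div (j * i)))"
    by (simp add: G sum_distrib_left div_mult2_eq)
  also have "\<dots> = (\<Sum>m=1..n. \<Sum>j | j dvd m. of_int (moebius_mu j) * F (n div m))"
    by (rule sum_sum_div_mult)
  also have "\<dots> = (\<Sum>m=1..n. of_int (\<Sum>j | j dvd m. moebius_mu j) * F (n div m))"
    by (simp add: sum_distrib_right)
  also have "\<dots> = (\<Sum>m=1..n. if m = 1 then F n else 0)"
    by (intro sum.cong refl) (simp add: sum_moebius_mu_divisors)
  also have "\<dots> = F n"
    using assms by simp
  finally show ?thesis ..
qed

lemma S_fun_eq_sum_div:
  "S_fun a n = (\<Sum>j=1..n. \<Sum>k=1..n div j. a k * of_real (ln (real k)))"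
proof -
  have "S_fun a n = (\<Sum>k=1..n. \<Sum>j=1..n div k. a k * of_real (ln (real k)))"
    by (simp add: S_fun_def floor_divide_of_nat_eq mult_ac)
  also have "\<dots> = (\<Sum>j=1..n. \<Sum>k=1..n div j. a k * of_real (ln (real k)))"
    by (rule sum_sum_div_swap[symmetric])
  finally show ?thesis .
qed

lemma norm_le_powr_of_tendsto_zero:
  fixes f :: "nat \<Rightarrow> 'a::real_normed_vector"
  assumes "(\<lambda>k. norm (f k) / real k powr v) \<longlonglongrightarrow> 0" and "f 0 = 0"
  obtains C where "\<And>k. norm (f k) \<le> C * real k powr v"
proof -
  have "Bseq (\<lambda>k. norm (f k) / real k powr v)"
    using assms(1) by (intro convergent_imp_Bseq convergentI)
  then obtain C where C: "\<And>k. norm (norm (f k) / real k powr v) \<le> C"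
    by (rule BseqE) blast
  have "norm (f k) \<le> C * real k powr v" for k
  proof (cases "k = 0")
    case False
    with C[of k] show ?thesis by (simp add: pos_divide_le_eq)
  qed (simp add: assms(2))
  then show ?thesis by (rule that)
qed

lemma norm_moebius_inversion_le:
  fixes F G :: "nat \<Rightarrow> 'a::real_normed_algebra_1"
  assumes "v > 1"
    and G: "\<And>m. G m = (\<Sum>i=1..m. F (m div i))"
    and G_le: "\<And>m. norm (G m) \<le> C * real m powr v"
    and "n \<ge> 1"
  shows "norm (F n) \<le> C * (\<Sum>j. real (Suc j) powr -v) * real n powr v"
proof -
  have "C \<ge> 0" using G_le[of 1] by (simp add: order_trans[OF norm_ge_zero])
  have "summable (\<lambda>j. real (Suc j) powr -v)"
    using \<open>v > 1\<close> summable_Suc_iff[of "\<lambda>j. real j powr -v"] by (simp add: summable_real_powr_iff)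
  then have zeta_le: "(\<Sum>j=1..n. real j powr -v) \<le> (\<Sum>j. real (Suc j) powr -v)"
    unfolding sum_bounds_lt_plus1[symmetric] by (rule sum_le_suminf) auto
  have "norm (F n) = norm (\<Sum>j=1..n. of_int (moebius_mu j) * G (n div j))"
    using moebius_inversion_div[OF G \<open>n \<ge> 1\<close>] by simp
  also have "\<dots> \<le> (\<Sum>j=1..n. C * (real n powr v * real j powr -v))"
  proof (rule sum_norm_le)
    fix j assume j: "j \<in> {1..n}"
    have "norm (of_int (moebius_mu j) * G (n div j)) \<le> \<bar>real_of_int (moebius_mu j)\<bar> * norm (G (n div j))"
      by (metis norm_mult_ineq norm_of_int)
    also have "\<dots> \<le> norm (G (n div j))"
      using abs_moebius_mu_le[of j] by (intro mult_left_le_one_le) auto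
    also have "\<dots> \<le> C * real (n div j) powr v"
      by (rule G_le)
    also have "\<dots> \<le> C * (real n / real j) powr v"
      using \<open>C \<ge> 0\<close> \<open>v > 1\<close> by (intro mult_left_mono powr_mono2) (auto simp: of_nat_div_le_of_nat)
    also have "\<dots> = C * (real n powr v * real j powr -v)"
      using j by (simp add: powr_divide powr_minus_divide)
    finally show "norm (of_int (moebius_mu j) * G (n div j)) \<le> C * (real n powr v * real j powr -v)" .
  qed
  also have "\<dots> = C * real n powr v * (\<Sum>j=1..n. real j powr -v)"
    by (simp add: sum_distrib_left mult.assoc)
  also have "\<dots> \<le> C * real n powr v * (\<Sum>j. real (Suc j) powr -v)"
    using \<open>C \<ge> 0\<close> zeta_le by (intro mult_left_mono) auto
  finally show ?thesis by (simp add: mult_ac)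
qed

lemma summable_scaleR_by_parts:
  fixes b :: "nat \<Rightarrow> 'a::banach" and c :: "nat \<Rightarrow> real"
  assumes lim: "(\<lambda>N. c N *\<^sub>R (\<Sum>n\<le>N. b n)) \<longlonglongrightarrow> 0"
    and summable: "summable (\<lambda>n. norm (\<Sum>i\<le>n. b i) * \<bar>c n - c (Suc n)\<bar>)"
  shows "summable (\<lambda>n. c n *\<^sub>R b n)"
proof -
  define w where "w n = (c n - c (Suc n)) *\<^sub>R (\<Sum>i\<le>n. b i)" for n
  have by_parts: "(\<Sum>n<Suc N. c n *\<^sub>R b n) = c N *\<^sub>R (\<Sum>n\<le>N. b n) + (\<Sum>n<N. w n)" for N
    by (induction N) (simp_all add: w_def algebra_simps)
  have "(\<lambda>n. norm (w n)) = (\<lambda>n. norm (\<Sum>i\<le>n. b i) * \<bar>c n - c (Suc n)\<bar>)"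
    by (simp only: w_def norm_scaleR mult.commute)
  with summable have "summable w"
    by (simp add: summable_norm_cancel)
  then have "(\<lambda>N. c N *\<^sub>R (\<Sum>n\<le>N. b n) + (\<Sum>n<N. w n)) \<longlonglongrightarrow> 0 + suminf w"
    by (intro tendsto_add lim summable_LIMSEQ)
  then have "(\<lambda>N. \<Sum>n<Suc N. c n *\<^sub>R b n) \<longlonglongrightarrow> suminf w"
    by (simp only: by_parts add_0)
  then have "(\<lambda>N. \<Sum>n<N. c n *\<^sub>R b n) \<longlonglongrightarrow> suminf w"
    by (rule LIMSEQ_imp_Suc)
  then show ?thesis
    unfolding summable_def sums_def by blast
qed

lemma has_real_derivative_inverse_ln_times_powr:
  fixes s x :: real
  assumes "x > 1"
  shows "((\<lambda>x. inverse (ln x) * x powr -s) has_real_derivative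
           - (inverse x / (ln x)\<^sup>2) * x powr -s + inverse (ln x) * (-s * x powr (-s - 1))) (at x)"
proof -
  have "((\<lambda>x. inverse (ln x)) has_real_derivative - (inverse x / (ln x)\<^sup>2)) (at x)"
    using DERIV_inverse_fun[OF DERIV_ln[of x]] assms
    by (simp add: field_simps power2_eq_square)
  moreover have "((\<lambda>x. x powr -s) has_real_derivative -s * x powr (-s - 1)) (at x)"
    using has_real_derivative_powr[of x "-s"] assms by simp
  ultimately have "((\<lambda>x. inverse (ln x) * x powr -s) has_real_derivative
      - (inverse x / (ln x)\<^sup>2) * x powr -s + (-s * x powr (-s - 1)) * inverse (ln x)) (at x)"
    by (rule DERIV_mult)
  then show ?thesis by (simp add: mult.commute)
qed

lemma abs_diff_inverse_ln_times_powr_le: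
  fixes s x :: real
  assumes "s \<ge> 0" and "x \<ge> 2"
  shows "\<bar>inverse (ln x) * x powr -s - inverse (ln (x + 1)) * (x + 1) powr -s\<bar>
           \<le> ((inverse (ln 2))\<^sup>2 + s * inverse (ln 2)) * x powr (-s - 1)"
proof -
  define g' where "g' t = - (inverse t / (ln t)\<^sup>2) * t powr -s + inverse (ln t) * (-s * t powr (-s - 1))"
    for t :: real
  have "\<exists>z. x < z \<and> z < x + 1 \<and>
      inverse (ln (x + 1)) * (x + 1) powr -s - inverse (ln x) * x powr -s = (x + 1 - x) * g' z"
    using assms unfolding g'_def
    by (intro MVT2 has_real_derivative_inverse_ln_times_powr) auto
  then obtain z where z: "x < z" "z < x + 1"
    and mvt: "inverse (ln (x + 1)) * (x + 1) powr -s - inverse (ln x) * x powr -s = g' z"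
    by auto
  have ln_z: "ln 2 \<le> ln z" "0 < ln z" using z assms by simp_all
  then have inv_ln: "0 \<le> inverse (ln z)" "inverse (ln z) \<le> inverse (ln 2)"
    by (auto intro: le_imp_inverse_le)
  have z_powr: "inverse z * z powr -s = z powr (-s - 1)"
    using z assms by (simp add: powr_diff powr_minus divide_inverse mult.commute)
  have "g' z = - (z powr (-s - 1) * ((inverse (ln z))\<^sup>2 + s * inverse (ln z)))"
    using ln_z z assms unfolding g'_def z_powr[symmetric] by (simp add: field_simps power2_eq_square)
  then have "\<bar>g' z\<bar> = z powr (-s - 1) * ((inverse (ln z))\<^sup>2 + s * inverse (ln z))"
    using inv_ln assms by simp
  also have "\<dots> \<le> x powr (-s - 1) * ((inverse (ln 2))\<^sup>2 + s * inverse (ln 2))"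
  proof (rule mult_mono)
    show "z powr (-s - 1) \<le> x powr (-s - 1)"
      using z assms by (intro powr_mono2') auto
    show "(inverse (ln z))\<^sup>2 + s * inverse (ln z) \<le> (inverse (ln 2))\<^sup>2 + s * inverse (ln 2)"
      using inv_ln assms by (intro add_mono power_mono mult_left_mono) auto
  qed (use inv_ln assms in auto)
  finally show ?thesis
    using mvt by (simp add: abs_minus_commute mult.commute)
qed

lemma summable_inverse_ln_times_powr_scaleR:
  fixes b :: "nat \<Rightarrow> 'a::banach" and s v K :: real
  assumes "0 \<le> s" and "v < s"
    and partial_le: "\<And>N. norm (\<Sum>n\<le>N. b n) \<le> K * real N powr v"
  shows "summable (\<lambda>n. (inverse (ln (real n)) * real n powr -s) *\<^sub>R b n)"
proof -
  define c where "c n = inverse (ln (real n)) * real n powr -s" for n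
  define M where "M = (inverse (ln 2))\<^sup>2 + s * inverse (ln (2::real))"
  have "0 \<le> K"
    using partial_le[of 1] by (simp add: order_trans[OF norm_ge_zero])
  have c_nonneg: "0 \<le> c N" for N
    by (cases "N = 0") (simp_all add: c_def)
  have c_le: "c N \<le> inverse (ln 2) * real N powr -s" for N
  proof (cases "N \<ge> 2")
    case True
    then have "ln 2 \<le> ln (real N)" by simp
    then show ?thesis
      unfolding c_def by (intro mult_right_mono le_imp_inverse_le) auto
  next
    case False
    \<comment> \<open>the weight vanishes for \<open>N \<le> 1\<close> because \<open>ln 0 = ln 1 = 0\<close>\<close>
    then have "N = 0 \<or> N = 1" by auto
    then show ?thesis by (auto simp: c_def)
  qed
  have lim: "(\<lambda>N. c N *\<^sub>R (\<Sum>n\<le>N. b n)) \<longlonglongrightarrow> 0"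
  proof (rule Lim_null_comparison)
    show "\<forall>\<^sub>F N in sequentially. norm (c N *\<^sub>R (\<Sum>n\<le>N. b n)) \<le> inverse (ln 2) * K * real N powr (v - s)"
    proof (intro always_eventually allI)
      fix N
      have "norm (c N *\<^sub>R (\<Sum>n\<le>N. b n)) \<le> (inverse (ln 2) * real N powr -s) * (K * real N powr v)"
        using c_nonneg c_le partial_le by (simp add: mult_mono)
      also have "\<dots> = inverse (ln 2) * K * real N powr (v - s)"
        by (simp add: powr_diff powr_minus divide_inverse mult_ac)
      finally show "norm (c N *\<^sub>R (\<Sum>n\<le>N. b n)) \<le> inverse (ln 2) * K * real N powr (v - s)" .
    qed
    show "(\<lambda>N. inverse (ln 2) * K * real N powr (v - s)) \<longlonglongrightarrow> 0"
      using \<open>v < s\<close> by (intro tendsto_mult_right_zero tendsto_neg_powr filterlim_real_sequentially) auto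
  qed
  have "summable (\<lambda>n. norm (\<Sum>i\<le>n. b i) * \<bar>c n - c (Suc n)\<bar>)"
  proof (rule summable_comparison_test')
    show "summable (\<lambda>n. K * M * real n powr (v - s - 1))"
      using \<open>v < s\<close> by (intro summable_mult) (simp add: summable_real_powr_iff)
    fix n :: nat assume "n \<ge> 2"
    then have "\<bar>c n - c (Suc n)\<bar> \<le> M * real n powr (-s - 1)"
      using abs_diff_inverse_ln_times_powr_le[of s "real n"] \<open>0 \<le> s\<close>
      by (simp add: c_def M_def add.commute)
    then have "norm (\<Sum>i\<le>n. b i) * \<bar>c n - c (Suc n)\<bar> \<le> (K * real n powr v) * (M * real n powr (-s - 1))"
      using partial_le \<open>0 \<le> K\<close> by (intro mult_mono) auto
    also have "\<dots> = K * M * real n powr (v - s - 1)"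
      by (simp add: powr_add[symmetric] algebra_simps)
    finally show "norm (norm (\<Sum>i\<le>n. b i) * \<bar>c n - c (Suc n)\<bar>) \<le> K * M * real n powr (v - s - 1)"
      by simp
  qed
  then show ?thesis
    using summable_scaleR_by_parts[OF lim] by (simp add: c_def)
qed

lemma norm_sum_mult_ln_le:
  fixes a :: "nat \<Rightarrow> complex"
  assumes "v > 1" and S_le: "\<And>k. norm (S_fun a k) \<le> C * real k powr v"
  shows "norm (\<Sum>n\<le>N. a n * of_real (ln (real n))) \<le> C * (\<Sum>j. real (Suc j) powr -v) * real N powr v"
proof (cases "N = 0")
  case False
  define B where "B m = (\<Sum>n=1..m. a n * of_real (ln (real n)))" for m
  \<comment> \<open>the term \<open>n = 0\<close> vanishes because \<open>ln 0 = 0\<close>\<close>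
  have "(\<Sum>n\<le>N. a n * of_real (ln (real n))) = B N"
    by (simp add: B_def atMost_atLeast0 sum.atLeast_Suc_atMost)
  moreover have "S_fun a m = (\<Sum>j=1..m. B (m div j))" for m
    by (simp add: B_def S_fun_eq_sum_div)
  ultimately show ?thesis
    using norm_moebius_inversion_le[OF \<open>v > 1\<close> _ S_le, of B N] False by simp
qed simp

lemma scaleR_inverse_ln_times_powr_mult_ln:
  fixes z :: "'a::real_normed_field"
  assumes "n \<ge> 2"
  shows "(inverse (ln (real n)) * real n powr -s) *\<^sub>R (z * of_real (ln (real n)))
           = z / of_real (real n powr s)"
proof -
  have "inverse (ln (real n)) * real n powr -s * ln (real n) = inverse (real n powr s)"
    using assms by (simp add: powr_minus)
  then have "(inverse (ln (real n)) * real n powr -s) *\<^sub>R (z * of_real (ln (real n)))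
      = of_real (inverse (real n powr s)) * z"
    by (simp only: scaleR_conv_of_real of_real_mult[symmetric] mult_ac)
  then show ?thesis
    by (simp add: divide_inverse mult.commute)
qed

theorem lemma2:
  fixes a :: "nat \<Rightarrow> complex"
  assumes "\<And>v. v > 1 \<Longrightarrow> (\<lambda>k. norm (S_fun a k) / real k powr v) \<longlonglongrightarrow> 0"
  shows "\<And>v. v > 1 \<Longrightarrow> summable (\<lambda>m. a (Suc m) / of_real (real (Suc m) powr v))"
proof -
  fix s :: real assume "s > 1"
  define v where "v = (1 + s) / 2"
  have "1 < v" "v < s" using \<open>s > 1\<close> by (auto simp: v_def)
  have "S_fun a 0 = 0" by (simp add: S_fun_def)
  then obtain C where S_le: "\<And>k. norm (S_fun a k) \<le> C * real k powr v"
    using norm_le_powr_of_tendsto_zero[OF assms[OF \<open>1 < v\<close>]] by blast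
  have "summable (\<lambda>n. (inverse (ln (real n)) * real n powr -s) *\<^sub>R (a n * of_real (ln (real n))))"
    using \<open>s > 1\<close>
    by (intro summable_inverse_ln_times_powr_scaleR[OF _ \<open>v < s\<close> norm_sum_mult_ln_le[OF \<open>1 < v\<close> S_le]])
       simp
  moreover have "\<forall>\<^sub>F n in sequentially.
      (inverse (ln (real n)) * real n powr -s) *\<^sub>R (a n * of_real (ln (real n))) = a n / of_real (real n powr s)"
    using eventually_ge_at_top[of 2] by eventually_elim (rule scaleR_inverse_ln_times_powr_mult_ln)
  ultimately have "summable (\<lambda>n. a n / of_real (real n powr s))"
    by (simp add: summable_cong)
  then show "summable (\<lambda>m. a (Suc m) / of_real (real (Suc m) powr s))"
    by (subst summable_Suc_iff)
qed

end
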